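(* Let $a,c\in\mathbb{C}$ satisfy $2c\notin\{0,-1,-2,\dots\}$, $2a\notin\{1,2,3,\dots\}$ and $\operatorname{Re}(c-a)>\tfrac12$. Then $$ {}_2H_2\!\left[\begin{matrix} a,\ a+\tfrac12\\ c,\ c+\tfrac12\end{matrix};\ -1\right]=\frac{\Gamma(2c)\,\Gamma(1-2a)}{\Gamma(2c-2a)}\cdot 2^{\,c-a-\frac12}\cos\!\left(\frac{(2c+2a-1)\pi}{4}\right). $$
   Context: For $x\in\mathbb{C}$ and integers $m$, the Pochhammer symbol is $(x)_0=1$, $(x)_m=x(x+1)\cdots(x+m-1)$ for $m\ge1$, and $(x)_{-m}=\dfrac{1}{(x-1)(x-2)\cdots(x-m)}$ for $m\ge1$. The bilateral hypergeometric series is $$ {}_2H_2\!\left[\begin{matrix} a_1,a_2\\ b_1,b_2\end{matrix};z\right]=\sum_{m=-\infty}^{\infty}\frac{(a_1)_m(a_2)_m}{(b_1)_m(b_2)_m}\,z^m , $$ which under the stated hypotheses converges absolutely at $z=-1$. (The paper's displayed equation (23) has the power $2^{c-a-3/2}$, which is a typo; its preceding line (22) and the consequence (24) give $2^{c-a-1/2}$ as stated here.) *)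

theory Defs
  imports "HOL-Analysis.Analysis"
begin

definition poch_int :: "complex \<Rightarrow> int \<Rightarrow> complex" where
  "poch_int x m = (if 0 \<le> m then pochhammer x (nat m)
                   else 1 / (\<Prod>k=1..nat (- m). (x - of_nat k)))"

definition H22_term :: "complex \<Rightarrow> complex \<Rightarrow> complex \<Rightarrow> complex \<Rightarrow> complex \<Rightarrow> int \<Rightarrow> complex" where
  "H22_term a1 a2 b1 b2 z m =
     (poch_int a1 m * poch_int a2 m) / (poch_int b1 m * poch_int b2 m) * z powi m"

definition H22 :: "complex \<Rightarrow> complex \<Rightarrow> complex \<Rightarrow> complex \<Rightarrow> complex \<Rightarrow> complex" where
  "H22 a1 a2 b1 b2 z = (\<Sum>\<^sub>\<infinity>m\<in>(UNIV::int set). H22_term a1 a2 b1 b2 z m)"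

end

theory Submission
  imports Defs "HOL-Real_Asymp.Real_Asymp"
begin

text \<open>
  By the duplication formula for Pochhammer symbols, the 2H2 series at -1 is the even part of the
  bilateral series 1H1 = sum over integers n of (A)_n/(C)_n z^n, with A = 2a and C = 2c, taken at
  z = i; that is, the average of its values at i and -i. On the unit circle (z ~= 1) the 1H1 series
  sums to Gamma(C) Gamma(1 - A) / Gamma(C - A) (1 - z)^(-A) (1 - 1/z)^(C - 1). For Re A < 0 and
  Re C > 1 this follows by multiplying the binomial series of the two factors, which converge
  absolutely on the circle, and summing the coefficient of each z^n by Gauss's theorem. A contiguous
  relation lowers C by one, and the symmetry (A, C, z) -> (1 - C, 1 - A, 1/z) of the series swaps
  the roles of the two parameters; together they give the general case. Gauss's theorem itself
  follows from its contiguous relation in c and the limit c -> infinity.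
\<close>

section \<open>Unordered sums\<close>

lemma has_sum_product:
  fixes f :: "'a \<Rightarrow> 'c :: {real_normed_field, banach}" and g :: "'b \<Rightarrow> 'c"
  assumes f: "(\<lambda>x. norm (f x)) summable_on A" "(f has_sum a) A"
      and g: "(\<lambda>y. norm (g y)) summable_on B" "(g has_sum b) B"
  shows "((\<lambda>(x, y). f x * g y) has_sum (a * b)) (A \<times> B)"
proof (rule has_sum_SigmaI)
  show "((\<lambda>y. case (x, y) of (x, y) \<Rightarrow> f x * g y) has_sum f x * b) B" for x
    using has_sum_cmult_right[OF g(2)] by simp
  show "((\<lambda>x. f x * b) has_sum a * b) A"
    using has_sum_cmult_left[OF f(2)] .
  have "(\<lambda>p. norm (case p of (x, y) \<Rightarrow> f x * g y)) summable_on A \<times> B"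
  proof (rule iffD2[OF Infinite_Sum.abs_summable_on_Sigma_iff], intro conjI ballI)
    show "(\<lambda>y. norm (case (x, y) of (x, y) \<Rightarrow> f x * g y)) summable_on B" for x
      using summable_on_cmult_right[OF g(1), of "norm (f x)"] by (simp add: norm_mult)
    have inner: "(\<Sum>\<^sub>\<infinity>y\<in>B. norm (case (x, y) of (x, y) \<Rightarrow> f x * g y))
                   = norm (f x) * (\<Sum>\<^sub>\<infinity>y\<in>B. norm (g y))" for x
      by (simp add: norm_mult infsum_cmult_right')
    have "(\<lambda>x. norm (f x) * (\<Sum>\<^sub>\<infinity>y\<in>B. norm (g y))) summable_on A"
      using f(1) by (rule summable_on_cmult_left)
    then show "(\<lambda>x. norm (\<Sum>\<^sub>\<infinity>y\<in>B. norm (case (x, y) of (x, y) \<Rightarrow> f x * g y)))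
                 summable_on A"
      unfolding inner by (simp add: abs_mult infsum_nonneg)
  qed
  then show "(\<lambda>(x, y). f x * g y) summable_on A \<times> B"
    by (rule abs_summable_summable)
qed

lemma has_sum_diagonal_reindex:
  fixes f :: "nat \<times> nat \<Rightarrow> 'a :: topological_comm_monoid_add"
  shows "((\<lambda>(n, k). f (if n \<ge> 0 then (nat n + k, k) else (k, nat (- n) + k))) has_sum S) UNIV
           \<longleftrightarrow> (f has_sum S) UNIV"
  by (rule has_sum_reindex_bij_witness[where i = "\<lambda>(j, k). (int j - int k, min j k)"
        and j = "\<lambda>(n, k). if n \<ge> 0 then (nat n + k, k) else (k, nat (- n) + k)"]) auto

lemma summable_on_int_split:
  fixes f :: "int \<Rightarrow> 'a :: {topological_comm_monoid_add, t2_space}"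
  assumes "(\<lambda>m. f (int m)) summable_on UNIV" and "(\<lambda>m. f (- int (Suc m))) summable_on UNIV"
  shows "f summable_on UNIV"
proof -
  have "f summable_on range int" "f summable_on range (\<lambda>m. - int (Suc m))"
    using assms by (simp_all add: summable_on_reindex inj_on_def comp_def)
  moreover have "x \<in> range int \<union> range (\<lambda>m. - int (Suc m))" for x :: int
    by (cases x rule: int_cases) auto
  then have "range int \<union> range (\<lambda>m. - int (Suc m)) = UNIV"
    by auto
  moreover have "range int \<inter> range (\<lambda>m. - int (Suc m)) = {}"
    by auto
  ultimately show ?thesis
    by (metis summable_on_Un_disjoint)
qed

lemma has_sum_even_part:
  fixes c :: "int \<Rightarrow> 'a :: real_normed_field"
  assumes "((\<lambda>n. c n * z powi n) has_sum S1) UNIV" and "((\<lambda>n. c n * (- z) powi n) has_sum S2) UNIV"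
  shows "((\<lambda>m. c (2 * m) * z powi (2 * m)) has_sum (S1 + S2) / 2) UNIV"
proof -
  define g where "g n = (c n * z powi n + c n * (- z) powi n) / 2" for n
  have "(g has_sum (S1 + S2) / 2) UNIV"
    unfolding g_def using assms by (intro has_sum_divide_const has_sum_add)
  moreover have "g n = 0" if "n \<notin> range (\<lambda>m. 2 * m)" for n
  proof -
    have "odd n"
      using that by (metis evenE rangeI)
    then show ?thesis
      by (simp add: g_def)
  qed
  ultimately have "(g has_sum (S1 + S2) / 2) (range (\<lambda>m. 2 * m))"
    by (subst (asm) has_sum_cong_neutral[where T = "range (\<lambda>m. 2 * m)" and g = g]) auto
  then have "((g \<circ> (\<lambda>m. 2 * m)) has_sum (S1 + S2) / 2) UNIV"
    by (subst (asm) has_sum_reindex) (auto simp: inj_on_def)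
  then show ?thesis
    by (simp add: g_def comp_def)
qed

section \<open>Pochhammer symbols\<close>

lemma plus_of_nat_in_nonpos_Ints_imp:
  "z + of_nat n \<in> \<int>\<^sub>\<le>\<^sub>0 \<Longrightarrow> z \<in> \<int>\<^sub>\<le>\<^sub>0"
  using nonpos_Ints_diff_Nats[of "z + of_nat n" "of_nat n"] by simp

lemma Re_pos_imp_notin_nonpos_Ints:
  fixes z :: complex
  shows "Re z > 0 \<Longrightarrow> z \<notin> \<int>\<^sub>\<le>\<^sub>0"
  by (auto elim!: nonpos_Ints_cases')

lemma pochhammer_neq_0:
  fixes z :: "'a :: field_char_0"
  shows "z \<notin> \<int>\<^sub>\<le>\<^sub>0 \<Longrightarrow> pochhammer z n \<noteq> 0"
  by (auto simp: pochhammer_eq_0_iff)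

lemma pochhammer_plus1_ratio:
  fixes z :: "'a :: field_char_0"
  assumes "z \<notin> \<int>\<^sub>\<le>\<^sub>0"
  shows "(z + of_nat m) / pochhammer (z + 1) m = z / pochhammer z m"
proof -
  have "pochhammer z m \<noteq> 0" "pochhammer (z + 1) m \<noteq> 0"
    using assms plus_one_in_nonpos_Ints_imp pochhammer_neq_0 by blast+
  moreover have "z * pochhammer (z + 1) m = (z + of_nat m) * pochhammer z m"
    by (metis pochhammer_rec pochhammer_rec')
  ultimately show ?thesis
    by (simp add: frac_eq_eq mult.commute)
qed

lemma norm_pochhammer_mono:
  fixes w :: complex
  assumes "Re w \<ge> 0" and "d \<ge> 0"
  shows "norm (pochhammer w k) \<le> norm (pochhammer (w + of_real d) k)"
proof -
  have "norm (w + of_nat i) \<le> norm (w + of_real d + of_nat i)" for i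
  proof -
    have "(Re (w + of_nat i))\<^sup>2 \<le> (Re (w + of_real d + of_nat i))\<^sup>2"
      using assms by (intro power_mono) auto
    then show ?thesis
      by (simp add: cmod_def)
  qed
  then show ?thesis
    unfolding pochhammer_prod prod_norm [symmetric] by (intro prod_mono) auto
qed

lemma norm_pochhammer_ratio_le:
  fixes x y :: complex
  assumes y: "y \<notin> \<int>\<^sub>\<le>\<^sub>0"
  obtains K where "K > 0"
    "\<And>n. norm (pochhammer x n / pochhammer y n) \<le> K * (real n + 1) powr (Re x - Re y)"
proof -
  define s where "s = Re x - Re y"
  define f where "f n = norm (pochhammer x n / pochhammer y n) / (real n + 1) powr s" for n
  \<comment> \<open>the Gauss products \<open>rGamma_series\<close> converge, so \<open>(x)\<^sub>n/(y)\<^sub>n\<close> is \<open>n\<^sup>x\<^sup>-\<^sup>y\<close> up to a bounded factor\<close>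
  have lim: "(\<lambda>n. norm (rGamma_series x n / rGamma_series y n) * (real n / (real n + 2)) powr s)
          \<longlonglongrightarrow> norm (rGamma x / rGamma y) * 1"
    using y
    by (intro tendsto_intros rGamma_series_LIMSEQ) (auto simp: rGamma_eq_zero_iff, real_asymp)
  have eq: "norm (rGamma_series x n / rGamma_series y n) * (real n / (real n + 2)) powr s
                   = f (Suc n)" if "n \<ge> 1" for n
  proof -
    define L where "L = complex_of_real (ln (real n))"
    have "rGamma_series x n / rGamma_series y n
            = pochhammer x (Suc n) / pochhammer y (Suc n) * exp ((y - x) * L)"
      by (simp add: rGamma_series_def L_def exp_diff field_simps)
    moreover have "norm (exp ((y - x) * L)) * (real n / (real n + 2)) powr s
                     = 1 / (real (Suc n) + 1) powr s"
      using that
      by (simp add: L_def s_def powr_divide powr_def [of "real n"] algebra_simps flip: exp_add)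
    moreover have "f (Suc n) = norm (pochhammer x (Suc n) / pochhammer y (Suc n))
                                 * (1 / (real (Suc n) + 1) powr s)"
      by (simp add: f_def)
    ultimately show ?thesis
      by (simp only: norm_mult mult.assoc)
  qed
  have "(\<lambda>n. f (Suc n)) \<longlonglongrightarrow> norm (rGamma x / rGamma y)"
    by (rule Lim_transform_eventually[OF lim[unfolded mult_1_right]])
       (rule eventually_mono[OF eventually_ge_at_top[of 1] eq])
  then have "Bseq f"
    by (intro convergent_imp_Bseq) (auto simp: convergent_def dest: LIMSEQ_imp_Suc)
  then obtain K where K: "K > 0" "\<And>n. norm (f n) \<le> K"
    by (auto elim: BseqE)
  have "norm (pochhammer x n / pochhammer y n) \<le> K * (real n + 1) powr s" for n
    using K(2)[of n] by (simp add: f_def divide_le_eq)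
  with K(1) show ?thesis unfolding s_def by (rule that)
qed

lemma summable_real_plus_one_powr:
  assumes "t < -1"
  shows "summable (\<lambda>k::nat. (real k + 1) powr t)"
proof -
  have "summable (\<lambda>k::nat. real k powr t)"
    using assms by (simp add: summable_real_powr_iff)
  then show ?thesis
    by (subst (asm) summable_Suc_iff [symmetric]) (simp add: add.commute)
qed

lemma summable_norm_pochhammer_ratio:
  fixes x y :: complex
  assumes "y \<notin> \<int>\<^sub>\<le>\<^sub>0" and "Re y - Re x > 1"
  shows "summable (\<lambda>n. norm (pochhammer x n / pochhammer y n))"
proof -
  obtain K where "K > 0"
    and K: "\<And>n. norm (pochhammer x n / pochhammer y n) \<le> K * (real n + 1) powr (Re x - Re y)"
    using norm_pochhammer_ratio_le[OF assms(1)] by blast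
  have "summable (\<lambda>n. K * (real n + 1) powr (Re x - Re y))"
    using assms(2) by (intro summable_mult summable_real_plus_one_powr) simp
  then show ?thesis
    by (rule summable_comparison_test'[where N = 0]) (simp add: K)
qed

lemma pochhammer_quotient_tendsto:
  fixes x1 x2 y1 y2 :: complex
  assumes "x1 + x2 = y1 + y2" and "y1 \<notin> \<int>\<^sub>\<le>\<^sub>0" and "y2 \<notin> \<int>\<^sub>\<le>\<^sub>0"
  shows "(\<lambda>m. pochhammer x1 m * pochhammer x2 m / (pochhammer y1 m * pochhammer y2 m))
           \<longlonglongrightarrow> rGamma x1 * rGamma x2 / (rGamma y1 * rGamma y2)"
proof (rule LIMSEQ_imp_Suc)
  have "(\<lambda>m. rGamma_series x1 m * rGamma_series x2 m / (rGamma_series y1 m * rGamma_series y2 m))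
          \<longlonglongrightarrow> rGamma x1 * rGamma x2 / (rGamma y1 * rGamma y2)"
    using assms(2,3) by (intro tendsto_intros) (auto simp: rGamma_eq_zero_iff)
  moreover have "rGamma_series x1 m * rGamma_series x2 m / (rGamma_series y1 m * rGamma_series y2 m)
          = pochhammer x1 (Suc m) * pochhammer x2 (Suc m)
              / (pochhammer y1 (Suc m) * pochhammer y2 (Suc m))" for m
  proof -
    define W where "W z = inverse (fact m) * exp (- z * of_real (ln (real m)))" for z :: complex
    have "W u * W v = inverse (fact m ^ 2) * exp (- (u + v) * of_real (ln (real m)))" for u v
      by (simp add: W_def power2_eq_square algebra_simps flip: exp_add)
    then have "W x1 * W x2 = W y1 * W y2"
      by (simp only: assms(1))
    moreover have "W y1 * W y2 \<noteq> 0"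
      by (simp add: W_def)
    moreover have "rGamma_series z m = pochhammer z (Suc m) * W z" for z
      by (simp add: rGamma_series_def W_def exp_minus field_simps)
    then have "rGamma_series x1 m * rGamma_series x2 m / (rGamma_series y1 m * rGamma_series y2 m)
      = pochhammer x1 (Suc m) * pochhammer x2 (Suc m) * (W x1 * W x2)
          / (pochhammer y1 (Suc m) * pochhammer y2 (Suc m) * (W y1 * W y2))"
      by (simp only: mult_ac)
    ultimately show ?thesis
      by (metis nonzero_mult_divide_mult_cancel_right)
  qed
  ultimately show "(\<lambda>m. pochhammer x1 (Suc m) * pochhammer x2 (Suc m)
                          / (pochhammer y1 (Suc m) * pochhammer y2 (Suc m)))
                   \<longlonglongrightarrow> rGamma x1 * rGamma x2 / (rGamma y1 * rGamma y2)"
    by simp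
qed

section \<open>Gauss's summation theorem\<close>

definition hyp2f1_coeff :: "complex \<Rightarrow> complex \<Rightarrow> complex \<Rightarrow> nat \<Rightarrow> complex" where
  "hyp2f1_coeff a b c k = pochhammer a k * pochhammer b k / (pochhammer c k * fact k)"

lemma hyp2f1_coeff_0 [simp]: "hyp2f1_coeff a b c 0 = 1"
  by (simp add: hyp2f1_coeff_def)

lemma hyp2f1_coeff_Suc_shift:
  "hyp2f1_coeff a b c (Suc k)
     = a * b / c * (hyp2f1_coeff (a + 1) (b + 1) (c + 1) k / of_nat (Suc k))"
  by (simp add: hyp2f1_coeff_def pochhammer_rec field_simps del: of_nat_Suc)

lemma hyp2f1_coeff_Suc:
  assumes "c \<notin> \<int>\<^sub>\<le>\<^sub>0"
  shows "of_nat (Suc k) * (c + of_nat k) * hyp2f1_coeff a b c (Suc k)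
           = (a + of_nat k) * (b + of_nat k) * hyp2f1_coeff a b c k"
proof -
  have "of_nat (Suc k) * (c + of_nat k) \<noteq> 0"
    using assms plus_of_nat_eq_0_imp by (auto simp del: of_nat_Suc)
  moreover have "hyp2f1_coeff a b c (Suc k)
      = hyp2f1_coeff a b c k * ((a + of_nat k) * (b + of_nat k))
          / (of_nat (Suc k) * (c + of_nat k))"
    by (simp add: hyp2f1_coeff_def pochhammer_rec' mult_ac del: of_nat_Suc)
  ultimately show ?thesis
    by (simp add: mult_ac)
qed

lemma hyp2f1_coeff_denom_plus1:
  assumes "c \<notin> \<int>\<^sub>\<le>\<^sub>0"
  shows "(c + of_nat k) * hyp2f1_coeff a b (c + 1) k = c * hyp2f1_coeff a b c k"
proof -
  have "hyp2f1_coeff a b d k = pochhammer a k * pochhammer b k / fact k / pochhammer d k" for d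
    by (simp add: hyp2f1_coeff_def mult.commute)
  then show ?thesis
    using pochhammer_plus1_ratio[OF assms, of k]
    by (metis times_divide_eq_left times_divide_eq_right mult.commute)
qed

lemma norm_hyp2f1_coeff_le:
  assumes "c \<notin> \<int>\<^sub>\<le>\<^sub>0"
  obtains K where "K > 0"
    "\<And>k. norm (hyp2f1_coeff a b c k) \<le> K * (real k + 1) powr (Re (a + b - c) - 1)"
proof -
  obtain K1 where K1: "K1 > 0"
    "\<And>k. norm (pochhammer a k / pochhammer c k) \<le> K1 * (real k + 1) powr (Re a - Re c)"
    using norm_pochhammer_ratio_le[OF assms] by blast
  obtain K2 where K2: "K2 > 0"
    "\<And>k. norm (pochhammer b k / pochhammer 1 k) \<le> K2 * (real k + 1) powr (Re b - 1)"
    using norm_pochhammer_ratio_le[of 1 b] by auto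
  have "norm (hyp2f1_coeff a b c k) \<le> (K1 * K2) * (real k + 1) powr (Re (a + b - c) - 1)" for k
  proof -
    have "norm (hyp2f1_coeff a b c k)
            = norm (pochhammer a k / pochhammer c k) * norm (pochhammer b k / pochhammer 1 k)"
      by (simp add: hyp2f1_coeff_def pochhammer_fact norm_mult norm_divide)
    also have "\<dots> \<le> (K1 * (real k + 1) powr (Re a - Re c)) * (K2 * (real k + 1) powr (Re b - 1))"
      using K1(1) by (intro mult_mono K1(2) K2(2)) auto
    also have "\<dots> = (K1 * K2) * (real k + 1) powr (Re (a + b - c) - 1)"
      by (simp add: powr_add [symmetric] algebra_simps)
    finally show ?thesis .
  qed
  with K1 K2 show ?thesis
    using that[of "K1 * K2"] by simp
qed

lemma summable_norm_hyp2f1_coeff: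
  assumes "c \<notin> \<int>\<^sub>\<le>\<^sub>0" and "Re (c - a - b) > 0"
  shows "summable (\<lambda>k. norm (hyp2f1_coeff a b c k))"
proof -
  obtain K where "K > 0"
    and K: "\<And>k. norm (hyp2f1_coeff a b c k) \<le> K * (real k + 1) powr (Re (a + b - c) - 1)"
    using norm_hyp2f1_coeff_le[OF assms(1)] by blast
  have "summable (\<lambda>k. K * (real k + 1) powr (Re (a + b - c) - 1))"
    using assms(2) by (intro summable_mult summable_real_plus_one_powr) simp
  then show ?thesis
    by (rule summable_comparison_test'[where N = 0]) (use K in simp)
qed

lemma summable_hyp2f1_coeff:
  assumes "c \<notin> \<int>\<^sub>\<le>\<^sub>0" and "Re (c - a - b) > 0"
  shows "summable (hyp2f1_coeff a b c)"
  using summable_norm_cancel[OF summable_norm_hyp2f1_coeff[OF assms]] .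

lemma hyp2f1_coeff_times_index_tendsto_0:
  assumes "c \<notin> \<int>\<^sub>\<le>\<^sub>0" and "Re (c - a - b) > 0"
  shows "(\<lambda>k. of_nat k * hyp2f1_coeff a b c k) \<longlonglongrightarrow> 0"
proof -
  obtain K where K: "K > 0"
    "\<And>k. norm (hyp2f1_coeff a b c k) \<le> K * (real k + 1) powr (Re (a + b - c) - 1)"
    using norm_hyp2f1_coeff_le[OF assms(1)] by blast
  have bound: "norm (of_nat k * hyp2f1_coeff a b c k) \<le> K * (real k + 1) powr Re (a + b - c)" for k
  proof -
    have "norm (of_nat k * hyp2f1_coeff a b c k)
            \<le> (real k + 1) * (K * (real k + 1) powr (Re (a + b - c) - 1))"
      unfolding norm_mult using K by (intro mult_mono) auto
    also have "\<dots> = K * ((real k + 1) * (real k + 1) powr (Re (a + b - c) - 1))"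
      by (simp add: mult_ac)
    also have "(real k + 1) * (real k + 1) powr (Re (a + b - c) - 1)
                 = (real k + 1) powr Re (a + b - c)"
      by (subst powr_mult_base) (auto simp: algebra_simps)
    finally show ?thesis .
  qed
  have "(\<lambda>k. K * (real k + 1) powr Re (a + b - c)) \<longlonglongrightarrow> 0"
    using assms(2) by (intro tendsto_mult_right_zero tendsto_neg_powr) (simp, real_asymp)
  then show ?thesis
    by (rule Lim_null_comparison[OF always_eventually[OF allI[OF bound]]])
qed

lemma hyp2f1_contiguous_c:
  assumes c: "c \<notin> \<int>\<^sub>\<le>\<^sub>0" and r: "Re (c - a - b) > 0"
  shows "c * (c - a - b) * suminf (hyp2f1_coeff a b c)
           = (c - a) * (c - b) * suminf (hyp2f1_coeff a b (c + 1))"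
proof -
  have c1: "c + 1 \<notin> \<int>\<^sub>\<le>\<^sub>0"
    using c plus_one_in_nonpos_Ints_imp by blast
  define t where "t = hyp2f1_coeff a b c"
  define s where "s = hyp2f1_coeff a b (c + 1)"
  define g where "g k = c * (of_nat k * t k)" for k
  have g_eq: "g k = of_nat k * (c + of_nat k) * s k" for k
    using hyp2f1_coeff_denom_plus1[OF c, of k a b] by (simp add: g_def s_def t_def)
  have g_Suc: "g (Suc k) = (a + of_nat k) * (b + of_nat k) * s k" for k
    using hyp2f1_coeff_Suc[OF c1, of k a b] by (simp add: g_eq s_def algebra_simps)
  have telescope: "c * (c - a - b) * t k - (c - a) * (c - b) * s k = g k - g (Suc k)" for k
  proof -
    have "c * (c - a - b) * t k = (c - a - b) * ((c + of_nat k) * s k)"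
      using hyp2f1_coeff_denom_plus1[OF c, of k a b] by (simp add: s_def t_def)
    then show ?thesis
      unfolding g_Suc g_eq[of k] by (simp add: algebra_simps)
  qed
  have "g \<longlonglongrightarrow> 0"
    unfolding g_def t_def by (intro tendsto_mult_right_zero hyp2f1_coeff_times_index_tendsto_0 c r)
  then have S0: "(\<lambda>k. c * (c - a - b) * t k - (c - a) * (c - b) * s k) sums 0"
    unfolding telescope using telescope_sums' by (fastforce simp: g_def)
  have S1: "(\<lambda>k. c * (c - a - b) * t k - (c - a) * (c - b) * s k)
              sums (c * (c - a - b) * suminf t - (c - a) * (c - b) * suminf s)"
    using r unfolding s_def t_def
    by (intro sums_diff sums_mult summable_sums summable_hyp2f1_coeff c c1) auto
  from sums_unique2[OF S1 S0] show ?thesis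
    unfolding s_def t_def by simp
qed

lemma hyp2f1_contiguous_c_iterate:
  assumes c: "c \<notin> \<int>\<^sub>\<le>\<^sub>0" and r: "Re (c - a - b) > 0"
  shows "pochhammer c m * pochhammer (c - a - b) m * suminf (hyp2f1_coeff a b c)
           = pochhammer (c - a) m * pochhammer (c - b) m * suminf (hyp2f1_coeff a b (c + of_nat m))"
proof (induction m)
  case (Suc m)
  define c' where "c' = c + of_nat m"
  have "c' \<notin> \<int>\<^sub>\<le>\<^sub>0"
    using c plus_of_nat_in_nonpos_Ints_imp unfolding c'_def by blast
  moreover have "Re (c' - a - b) > 0"
    using r by (simp add: c'_def)
  ultimately have step: "c' * (c' - a - b) * suminf (hyp2f1_coeff a b c')
                           = (c' - a) * (c' - b) * suminf (hyp2f1_coeff a b (c' + 1))"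
    by (rule hyp2f1_contiguous_c)
  have "pochhammer c (Suc m) * pochhammer (c - a - b) (Suc m) * suminf (hyp2f1_coeff a b c)
          = pochhammer (c - a) m * pochhammer (c - b) m
              * (c' * (c' - a - b) * suminf (hyp2f1_coeff a b c'))"
    using Suc.IH by (simp add: pochhammer_rec' c'_def algebra_simps)
  also have "\<dots> = pochhammer (c - a) (Suc m) * pochhammer (c - b) (Suc m)
                    * suminf (hyp2f1_coeff a b (c + of_nat (Suc m)))"
    unfolding step by (simp add: pochhammer_rec' c'_def algebra_simps)
  finally show ?case .
qed simp

lemma norm_hyp2f1_coeff_shift_le:
  assumes "Re c > 0" and "d \<ge> 0"
  shows "norm (hyp2f1_coeff a b (c + of_real d) k) \<le> norm (hyp2f1_coeff a b c k)"
proof -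
  have "Re (c + of_real d) > 0"
    using assms by simp
  then have "norm (pochhammer c k) > 0" "norm (pochhammer (c + of_real d) k) > 0"
    using assms(1) by (simp_all add: pochhammer_neq_0 Re_pos_imp_notin_nonpos_Ints)
  then show ?thesis
    unfolding hyp2f1_coeff_def norm_divide norm_mult using assms
    by (intro divide_left_mono mult_right_mono norm_pochhammer_mono mult_pos_pos) auto
qed

lemma norm_hyp2f1_sum_minus_1_le:
  assumes "Re c > 0" and "Re c0 > 0" and "d \<ge> 0" and "c + 1 = c0 + of_real d"
      and "Re (c0 - a - b) > 2"
  shows "norm (suminf (hyp2f1_coeff a b c) - 1)
           \<le> norm (a * b) / Re c * (\<Sum>k. norm (hyp2f1_coeff (a + 1) (b + 1) c0 k))"
proof -
  define h where "h k = norm (hyp2f1_coeff (a + 1) (b + 1) c0 k)" for k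
  have "summable h"
    unfolding h_def using assms(2,5)
    by (intro summable_norm_hyp2f1_coeff Re_pos_imp_notin_nonpos_Ints) auto
  have coeff_le: "norm (hyp2f1_coeff a b c (Suc k)) \<le> norm (a * b) / norm c * h k" for k
  proof -
    have "norm (hyp2f1_coeff (a + 1) (b + 1) (c + 1) k) / real (Suc k) \<le> h k"
      unfolding h_def assms(4) using norm_hyp2f1_coeff_shift_le[OF assms(2,3)]
      by (rule order_trans[rotated]) (simp add: divide_le_eq mult_le_cancel_left1)
    then have "norm (a * b / c) * (norm (hyp2f1_coeff (a + 1) (b + 1) (c + 1) k) / real (Suc k))
                 \<le> norm (a * b / c) * h k"
      by (rule mult_left_mono) simp
    then show ?thesis
      unfolding hyp2f1_coeff_Suc_shift by (simp add: norm_mult norm_divide del: of_nat_Suc)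
  qed
  have "summable (\<lambda>k. norm (a * b) / norm c * h k)"
    using \<open>summable h\<close> by (rule summable_mult)
  moreover from this have "summable (\<lambda>k. norm (hyp2f1_coeff a b c (Suc k)))"
    by (rule summable_comparison_test') (use coeff_le in auto)
  moreover have "Re c = Re c0 + d - 1"
    using arg_cong[OF assms(4), of Re] by simp
  then have "summable (hyp2f1_coeff a b c)"
    using assms by (intro summable_hyp2f1_coeff Re_pos_imp_notin_nonpos_Ints) auto
  then have "suminf (hyp2f1_coeff a b c) - 1 = (\<Sum>k. hyp2f1_coeff a b c (Suc k))"
    by (simp add: suminf_split_head)
  ultimately have "norm (suminf (hyp2f1_coeff a b c) - 1) \<le> (\<Sum>k. norm (a * b) / norm c * h k)"
    using coeff_le by (auto intro: order_trans[OF summable_norm suminf_le])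
  also have "\<dots> = norm (a * b) / norm c * suminf h"
    using \<open>summable h\<close> by (rule suminf_mult)
  also have "\<dots> \<le> norm (a * b) / Re c * suminf h"
    using assms(1) complex_Re_le_cmod[of c] suminf_nonneg[OF \<open>summable h\<close>]
    by (intro mult_right_mono divide_left_mono) (auto simp: h_def intro!: mult_pos_pos)
  finally show ?thesis
    by (simp add: h_def [abs_def])
qed

lemma hyp2f1_sum_tendsto_1:
  "(\<lambda>m. suminf (hyp2f1_coeff a b (c + of_nat m))) \<longlonglongrightarrow> 1"
proof -
  define m0 where "m0 = nat \<lceil>\<bar>Re c\<bar> + \<bar>Re a\<bar> + \<bar>Re b\<bar> + 2\<rceil>"
  have m0: "real m0 \<ge> \<bar>Re c\<bar> + \<bar>Re a\<bar> + \<bar>Re b\<bar> + 2"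
    unfolding m0_def by linarith
  define c0 where "c0 = c + of_nat m0 + 1"
  define M where "M = (\<Sum>k. norm (hyp2f1_coeff (a + 1) (b + 1) c0 k))"
  have bound: "norm (suminf (hyp2f1_coeff a b (c + of_nat m)) - 1)
                 \<le> norm (a * b) / (Re c + real m) * M" if "m \<ge> m0" for m
  proof -
    have "norm (suminf (hyp2f1_coeff a b (c + of_nat m)) - 1)
            \<le> norm (a * b) / Re (c + of_nat m) * M"
      unfolding M_def using m0 that
      by (intro norm_hyp2f1_sum_minus_1_le[where d = "real (m - m0)"]) (auto simp: c0_def)
    then show ?thesis
      by simp
  qed
  then have "\<forall>\<^sub>F m in sequentially. norm (suminf (hyp2f1_coeff a b (c + of_nat m)) - 1)
                                       \<le> norm (a * b) / (Re c + real m) * M"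
    by (rule eventually_mono[OF eventually_ge_at_top[of m0]])
  moreover have "(\<lambda>m. norm (a * b) / (Re c + real m) * M) \<longlonglongrightarrow> 0"
    by real_asymp
  ultimately have "(\<lambda>m. suminf (hyp2f1_coeff a b (c + of_nat m)) - 1) \<longlonglongrightarrow> 0"
    by (rule Lim_null_comparison)
  then show ?thesis
    by (simp add: LIM_zero_iff)
qed

theorem gauss_summation:
  assumes c: "c \<notin> \<int>\<^sub>\<le>\<^sub>0" and r: "Re (c - a - b) > 0"
  shows "hyp2f1_coeff a b c sums (Gamma c * Gamma (c - a - b) * rGamma (c - a) * rGamma (c - b))"
proof -
  have cab: "c - a - b \<notin> \<int>\<^sub>\<le>\<^sub>0"
    using r by (intro Re_pos_imp_notin_nonpos_Ints) simp
  define R where "R m = pochhammer (c - a) m * pochhammer (c - b) m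
                         / (pochhammer c m * pochhammer (c - a - b) m)" for m
  have "suminf (hyp2f1_coeff a b c) = R m * suminf (hyp2f1_coeff a b (c + of_nat m))" for m
    using hyp2f1_contiguous_c_iterate[OF c r, of m] pochhammer_neq_0[OF c, of m]
          pochhammer_neq_0[OF cab, of m]
    by (simp add: R_def field_simps)
  moreover have "(\<lambda>m. R m * suminf (hyp2f1_coeff a b (c + of_nat m)))
                   \<longlonglongrightarrow> rGamma (c - a) * rGamma (c - b) / (rGamma c * rGamma (c - a - b)) * 1"
    unfolding R_def using c cab
    by (intro tendsto_mult pochhammer_quotient_tendsto hyp2f1_sum_tendsto_1) auto
  ultimately have "suminf (hyp2f1_coeff a b c)
                     = rGamma (c - a) * rGamma (c - b) / (rGamma c * rGamma (c - a - b))"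
    by (simp add: LIMSEQ_const_iff)
  also have "\<dots> = Gamma c * Gamma (c - a - b) * rGamma (c - a) * rGamma (c - b)"
    by (simp add: Gamma_def field_simps)
  finally show ?thesis
    using summable_sums[OF summable_hyp2f1_coeff[OF c r]] by simp
qed

lemma gauss_summation_shifted:
  assumes C: "C \<notin> \<int>\<^sub>\<le>\<^sub>0" and r: "Re (C - A) > 0"
  shows "hyp2f1_coeff (A + of_nat m) (1 - C) (of_nat m + 1)
           sums (fact m * Gamma (C - A) * rGamma (1 - A) * (rGamma C / pochhammer C m))"
proof -
  have c: "of_nat m + 1 \<notin> (\<int>\<^sub>\<le>\<^sub>0 :: complex set)"
    by (rule Re_pos_imp_notin_nonpos_Ints) simp
  have "Re (of_nat m + 1 - (A + of_nat m) - (1 - C)) > 0"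
    using r by simp
  note gauss = gauss_summation[OF c this]
  have "of_nat m + 1 - (A + of_nat m) - (1 - C) = C - A" "of_nat m + 1 - (A + of_nat m) = 1 - A"
       "of_nat m + 1 - (1 - C) = C + of_nat m"
    by simp_all
  moreover have "Gamma (of_nat m + 1 :: complex) = fact m"
    using Gamma_fact[of m] by (simp add: add_ac)
  moreover have "rGamma (C + of_nat m) = rGamma C / pochhammer C m"
    using pochhammer_rGamma[of C m] pochhammer_neq_0[OF C] by (simp add: field_simps)
  ultimately show ?thesis
    using gauss by (simp only:)
qed

section \<open>The binomial series on the unit circle\<close>

definition neg_binomial_coeff :: "complex \<Rightarrow> nat \<Rightarrow> complex" where
  "neg_binomial_coeff A j = pochhammer A j / fact j"

lemma summable_norm_neg_binomial_coeff:
  assumes "Re A < 0"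
  shows "summable (\<lambda>j. norm (neg_binomial_coeff A j))"
  using summable_norm_pochhammer_ratio[of 1 A] assms
  by (simp add: neg_binomial_coeff_def pochhammer_fact)

lemma neg_binomial_series:
  assumes "norm w < 1"
  shows "(\<lambda>j. neg_binomial_coeff A j * w ^ j) sums (1 - w) powr (- A)"
proof -
  have "((-A) gchoose j) * (-w) ^ j = neg_binomial_coeff A j * w ^ j" for j
  proof -
    have "(-1) ^ j * (-1) ^ j = (1 :: complex)"
      by (simp flip: power_mult_distrib)
    then show ?thesis
      by (simp add: neg_binomial_coeff_def gbinomial_pochhammer power_minus [of w] mult_ac)
  qed
  then show ?thesis
    using gen_binomial_complex[of "-w" "-A"] assms by simp
qed

lemma continuous_on_power_series_cball:
  fixes \<alpha> :: "nat \<Rightarrow> complex"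
  assumes "summable (\<lambda>j. norm (\<alpha> j))"
  shows "continuous_on (cball 0 1) (\<lambda>w. \<Sum>j. \<alpha> j * w ^ j)"
proof -
  have limit: "uniform_limit (cball 0 1) (\<lambda>n w. \<Sum>j<n. \<alpha> j * w ^ j) (\<lambda>w. \<Sum>j. \<alpha> j * w ^ j)
                 sequentially"
  proof (rule Weierstrass_m_test[OF _ assms])
    fix n and w :: complex
    assume "w \<in> cball 0 1"
    then have "norm (w ^ n) \<le> 1"
      by (simp add: norm_power power_le_one)
    then show "norm (\<alpha> n * w ^ n) \<le> norm (\<alpha> n)"
      by (simp add: norm_mult mult_left_le)
  qed
  show ?thesis
    by (rule uniform_limit_theorem[OF _ limit])
       (intro always_eventually allI continuous_intros, simp)
qed

lemma unit_circle_Re_lt_1: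
  fixes z :: complex
  assumes "norm z = 1" and "z \<noteq> 1"
  shows "Re z < 1"
proof (rule ccontr)
  assume "\<not> Re z < 1"
  then have "Re z = 1"
    using assms(1) complex_Re_le_cmod[of z] by simp
  moreover from this have "Im z = 0"
    using assms(1) cmod_power2[of z] by simp
  ultimately show False
    using assms(2) complex_eq_iff by auto
qed

lemma neg_binomial_series_unit_circle:
  assumes A: "Re A < 0" and z: "norm z = 1" "z \<noteq> 1"
  shows "(\<lambda>j. neg_binomial_coeff A j * z ^ j) sums (1 - z) powr (- A)"
proof -
  define f where "f w = (\<Sum>j. neg_binomial_coeff A j * w ^ j)" for w
  define zm where "zm m = (1 - 1 / (real m + 2)) *\<^sub>R z" for m :: nat
  have zm: "norm (zm m) < 1" for m
    using z by (simp add: zm_def)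
  have "zm \<longlonglongrightarrow> (1 - 0) *\<^sub>R z"
    unfolding zm_def by (intro tendsto_intros) real_asymp
  then have zm_lim: "zm \<longlonglongrightarrow> z"
    by simp
  have "(\<lambda>m. f (zm m)) \<longlonglongrightarrow> f z"
    unfolding f_def using z zm summable_norm_neg_binomial_coeff[OF A]
    by (intro continuous_on_tendsto_compose[OF continuous_on_power_series_cball zm_lim])
       (auto intro!: always_eventually less_imp_le)
  moreover have "(\<lambda>m. f (zm m)) \<longlonglongrightarrow> (1 - z) powr (- A)"
  proof -
    have "1 - z \<notin> \<real>\<^sub>\<le>\<^sub>0"
      using unit_circle_Re_lt_1[OF z] by (simp add: complex_nonpos_Reals_iff)
    then have "(\<lambda>m. (1 - zm m) powr (- A)) \<longlonglongrightarrow> (1 - z) powr (- A)"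
      by (intro tendsto_powr_complex tendsto_intros zm_lim)
    then show ?thesis
      using neg_binomial_series[OF zm] by (simp add: f_def sums_iff)
  qed
  ultimately have "f z = (1 - z) powr (- A)"
    by (rule LIMSEQ_unique)
  moreover have "summable (\<lambda>j. norm (neg_binomial_coeff A j * z ^ j))"
    using summable_norm_neg_binomial_coeff[OF A] z by (simp add: norm_mult norm_power)
  then have "summable (\<lambda>j. neg_binomial_coeff A j * z ^ j)"
    by (rule summable_norm_cancel)
  ultimately show ?thesis
    unfolding f_def by (metis summable_sums)
qed

lemma has_sum_neg_binomial_unit_circle:
  assumes "Re A < 0" and "norm z = 1" and "z \<noteq> 1"
  shows "(\<lambda>j. norm (neg_binomial_coeff A j * z ^ j)) summable_on UNIV"
    and "((\<lambda>j. neg_binomial_coeff A j * z ^ j) has_sum (1 - z) powr (- A)) UNIV"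
proof -
  show "(\<lambda>j. norm (neg_binomial_coeff A j * z ^ j)) summable_on UNIV"
    using summable_norm_neg_binomial_coeff[OF assms(1)] assms(2)
    by (simp add: norm_mult norm_power summable_on_UNIV_nonneg_real_iff)
  then show "((\<lambda>j. neg_binomial_coeff A j * z ^ j) has_sum (1 - z) powr (- A)) UNIV"
    using neg_binomial_series_unit_circle[OF assms]
    by (simp add: norm_summable_imp_has_sum summable_on_UNIV_nonneg_real_iff)
qed

lemma has_sum_neg_binomial_product:
  assumes A: "Re A < 0" and C: "Re C > 1" and z: "norm z = 1" "z \<noteq> 1"
  shows "((\<lambda>(j, k). neg_binomial_coeff A j * neg_binomial_coeff (1 - C) k * z powi (int j - int k))
           has_sum (1 - z) powr (- A) * (1 - 1 / z) powr (C - 1)) (UNIV \<times> UNIV)"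
proof -
  have "norm (1 / z) = 1" "1 / z \<noteq> 1"
    using z by (auto simp: norm_divide)
  define f where "f = (\<lambda>(j, k). (neg_binomial_coeff A j * z ^ j)
                                    * (neg_binomial_coeff (1 - C) k * (1 / z) ^ k))"
  have "(f has_sum (1 - z) powr (- A) * (1 - 1 / z) powr (- (1 - C))) (UNIV \<times> UNIV)"
    unfolding f_def using A C z \<open>norm (1 / z) = 1\<close> \<open>1 / z \<noteq> 1\<close>
    by (intro has_sum_product has_sum_neg_binomial_unit_circle) auto
  moreover have "z \<noteq> 0"
    using z by auto
  then have "f = (\<lambda>(j, k). neg_binomial_coeff A j * neg_binomial_coeff (1 - C) k * z powi (int j - int k))"
    by (simp add: f_def fun_eq_iff power_int_diff power_one_over divide_inverse power_inverse)
  ultimately show ?thesis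
    by simp
qed

lemma has_sum_neg_binomial_shifted_products:
  assumes C: "C \<notin> \<int>\<^sub>\<le>\<^sub>0" and r: "Re (C - A) > 0"
  shows "((\<lambda>k. neg_binomial_coeff A (m + k) * neg_binomial_coeff (1 - C) k)
           has_sum Gamma (C - A) * rGamma (1 - A) * rGamma C * (pochhammer A m / pochhammer C m))
           UNIV"
proof -
  define c where "c = of_nat m + (1 :: complex)"
  have summand: "neg_binomial_coeff A (m + k) * neg_binomial_coeff (1 - C) k
                   = pochhammer A m / fact m * hyp2f1_coeff (A + of_nat m) (1 - C) c k" for k
  proof -
    have "(fact (m + k) :: complex) = fact m * pochhammer c k"
      using pochhammer_product'[of 1 m k] by (simp add: c_def pochhammer_fact add_ac)
    then show ?thesis
      unfolding neg_binomial_coeff_def pochhammer_product'[of A m k] hyp2f1_coeff_def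
      by (simp add: field_simps)
  qed
  from sums_mult[OF gauss_summation_shifted[OF C r, of m], of "pochhammer A m / fact m"]
  have "(\<lambda>k. neg_binomial_coeff A (m + k) * neg_binomial_coeff (1 - C) k)
          sums (Gamma (C - A) * rGamma (1 - A) * rGamma C * (pochhammer A m / pochhammer C m))"
    unfolding summand c_def by (simp add: field_simps)
  moreover have "summable (\<lambda>k. norm (neg_binomial_coeff A (m + k) * neg_binomial_coeff (1 - C) k))"
    unfolding summand norm_mult c_def using r
    by (intro summable_mult summable_norm_hyp2f1_coeff Re_pos_imp_notin_nonpos_Ints) auto
  ultimately show ?thesis
    by (intro norm_summable_imp_has_sum)
qed

section \<open>The bilateral series \<open>\<^sub>1H\<^sub>1\<close> on the unit circle\<close>

text \<open>\<open>H11_coeff A C n\<close> is \<open>(A)\<^sub>n/(C)\<^sub>n\<close> for integer \<open>n\<close> (see \<open>poch_int_ratio_eq_H11_coeff\<close>),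
  written for \<open>n < 0\<close> as \<open>(1 - C)\<^sub>-\<^sub>n/(1 - A)\<^sub>-\<^sub>n\<close>.\<close>

definition H11_coeff :: "complex \<Rightarrow> complex \<Rightarrow> int \<Rightarrow> complex" where
  "H11_coeff A C n =
     (if 0 \<le> n then pochhammer A (nat n) / pochhammer C (nat n)
      else pochhammer (1 - C) (nat (- n)) / pochhammer (1 - A) (nat (- n)))"

definition H11_closed_form :: "complex \<Rightarrow> complex \<Rightarrow> complex \<Rightarrow> complex" where
  "H11_closed_form A C z =
     Gamma C * Gamma (1 - A) / Gamma (C - A) * (1 - z) powr (- A) * (1 - 1 / z) powr (C - 1)"

lemma H11_coeff_of_nat [simp]: "H11_coeff A C (int m) = pochhammer A m / pochhammer C m"
  by (simp add: H11_coeff_def)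

lemma H11_coeff_minus_of_nat:
  "H11_coeff A C (- int m) = pochhammer (1 - C) m / pochhammer (1 - A) m"
  by (cases m) (simp_all add: H11_coeff_def del: of_nat_Suc)

lemma H11_coeff_reflect: "H11_coeff (1 - C) (1 - A) (- n) = H11_coeff A C n"
  by (auto simp: H11_coeff_def)

lemma has_sum_neg_binomial_diagonal:
  assumes A: "1 - A \<notin> \<int>\<^sub>\<le>\<^sub>0" and C: "C \<notin> \<int>\<^sub>\<le>\<^sub>0" and r: "Re (C - A) > 0"
  shows "((\<lambda>k. if n \<ge> 0 then neg_binomial_coeff A (nat n + k) * neg_binomial_coeff (1 - C) k
                else neg_binomial_coeff A k * neg_binomial_coeff (1 - C) (nat (- n) + k))
           has_sum Gamma (C - A) * rGamma (1 - A) * rGamma C * H11_coeff A C n) UNIV"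
proof (cases "n \<ge> 0")
  case True
  then show ?thesis
    using has_sum_neg_binomial_shifted_products[OF C r, of "nat n"] by (simp add: H11_coeff_def)
next
  case False
  have "Re ((1 - A) - (1 - C)) > 0"
    using r by simp
  from has_sum_neg_binomial_shifted_products[OF A this, of "nat (- n)"] False
  show ?thesis
    by (simp add: H11_coeff_def mult_ac)
qed

text \<open>The coefficient of \<open>z\<^sup>n\<close> in \<open>(1 - z) powr (-A) * (1 - 1/z) powr (C - 1)\<close> is a Gauss sum.\<close>

lemma has_sum_H11_base_case:
  assumes A: "Re A < 0" and C: "Re C > 1" and z: "norm z = 1" "z \<noteq> 1"
  shows "((\<lambda>n. H11_coeff A C n * z powi n) has_sum H11_closed_form A C z) UNIV"
proof -
  have r: "Re (C - A) > 0"
    using A C by simp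
  then have A1: "1 - A \<notin> \<int>\<^sub>\<le>\<^sub>0" and C1: "C \<notin> \<int>\<^sub>\<le>\<^sub>0" and CA: "C - A \<notin> \<int>\<^sub>\<le>\<^sub>0"
    using A C by (auto intro!: Re_pos_imp_notin_nonpos_Ints)
  define \<kappa> where "\<kappa> = Gamma (C - A) * rGamma (1 - A) * rGamma C"
  define d where
    "d n k = (if n \<ge> 0 then neg_binomial_coeff A (nat n + k) * neg_binomial_coeff (1 - C) k
              else neg_binomial_coeff A k * neg_binomial_coeff (1 - C) (nat (- n) + k))"
    for n :: int and k :: nat
  define f where
    "f = (\<lambda>(j, k). neg_binomial_coeff A j * neg_binomial_coeff (1 - C) k * z powi (int j - int k))"
  have "(\<lambda>(n, k). f (if n \<ge> 0 then (nat n + k, k) else (k, nat (- n) + k)))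
          = (\<lambda>(n, k). d n k * z powi n)"
    by (auto simp: fun_eq_iff f_def d_def)
  then have "((\<lambda>(n, k). d n k * z powi n)
               has_sum (1 - z) powr (- A) * (1 - 1 / z) powr (C - 1)) (UNIV \<times> UNIV)"
    using has_sum_diagonal_reindex[of f] has_sum_neg_binomial_product[OF A C z] by (simp add: f_def)
  moreover have "((\<lambda>k. d n k * z powi n) has_sum \<kappa> * H11_coeff A C n * z powi n) UNIV" for n
    unfolding d_def \<kappa>_def by (rule has_sum_cmult_left[OF has_sum_neg_binomial_diagonal[OF A1 C1 r]])
  ultimately have "((\<lambda>n. \<kappa> * H11_coeff A C n * z powi n)
                     has_sum (1 - z) powr (- A) * (1 - 1 / z) powr (C - 1)) UNIV"
    using has_sum_Sigma' by fastforce
  from has_sum_cmult_right[OF this, of "inverse \<kappa>"] A1 C1 CA show ?thesis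
    by (simp add: H11_closed_form_def \<kappa>_def rGamma_inverse_Gamma Gamma_eq_zero_iff field_simps)
qed

lemma H11_coeff_denom_plus1:
  assumes "C \<notin> \<int>\<^sub>\<le>\<^sub>0"
  shows "C * H11_coeff A C n = (C + of_int n) * H11_coeff A (C + 1) n"
proof (cases n rule: int_cases2)
  case (nonneg m)
  then show ?thesis
    using pochhammer_plus1_ratio[OF assms, of m]
    by (metis H11_coeff_of_nat of_int_of_nat_eq times_divide_eq_left times_divide_eq_right
        mult.commute)
next
  case (nonpos m)
  have "C * pochhammer (1 - C) m = (C - of_nat m) * pochhammer (- C) m"
  proof (cases m)
    case (Suc j)
    have "pochhammer (- C) (Suc j) = - C * pochhammer (1 - C) j"
      using pochhammer_rec[of "- C" j] by simp
    then show ?thesis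
      unfolding Suc pochhammer_rec'[of "1 - C" j] by (simp add: algebra_simps)
  qed simp
  then show ?thesis
    using nonpos by (simp add: H11_coeff_minus_of_nat field_simps)
qed

lemma H11_coeff_index_plus1:
  assumes "1 - A \<notin> \<int>\<^sub>\<le>\<^sub>0" and "C \<notin> \<int>\<^sub>\<le>\<^sub>0"
  shows "C * H11_coeff A C (n + 1) = (A + of_int n) * H11_coeff A (C + 1) n"
proof (cases n rule: int_cases)
  case (nonneg m)
  have "n + 1 = int (Suc m)"
    using nonneg by simp
  then have "C * H11_coeff A C (n + 1) = C * (pochhammer A (Suc m) / pochhammer C (Suc m))"
    by (simp only: H11_coeff_of_nat)
  also have "\<dots> = (A + of_nat m) * (pochhammer A m / pochhammer (C + 1) m)"
    unfolding pochhammer_rec'[of A m] pochhammer_rec[of C m] using assms(2) by auto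
  finally show ?thesis
    using nonneg by simp
next
  case (neg j)
  define P where "P = pochhammer (1 - C) j"
  define Q where "Q = (1 - A + of_nat j) * pochhammer (1 - A) j"
  have nz: "1 - A + of_nat j \<noteq> 0"
    using assms(1) plus_of_nat_eq_0_imp by blast
  have "n + 1 = - int j"
    using neg by simp
  then have "C * H11_coeff A C (n + 1) = (1 - A + of_nat j) * (C * P) / Q"
    using nz by (simp add: H11_coeff_minus_of_nat P_def Q_def)
  also have "\<dots> = (A + of_int n) * (- C * P) / Q"
    by (rule arg_cong[where f = "\<lambda>t. t / Q"]) (simp add: neg algebra_simps)
  also have "\<dots> = (A + of_int n) * H11_coeff A (C + 1) n"
    unfolding neg H11_coeff_minus_of_nat pochhammer_rec'[of "1 - A" j] P_def Q_def
    using pochhammer_rec[of "- C" j] by simp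
  finally show ?thesis .
qed

lemma norm_H11_coeff_le:
  assumes "1 - A \<notin> \<int>\<^sub>\<le>\<^sub>0" and "C \<notin> \<int>\<^sub>\<le>\<^sub>0"
  obtains K where "K > 0" "\<And>n. norm (H11_coeff A C n) \<le> K * (real (nat \<bar>n\<bar>) + 1) powr (Re A - Re C)"
proof -
  obtain K1 where K1: "K1 > 0"
    "\<And>m. norm (pochhammer A m / pochhammer C m) \<le> K1 * (real m + 1) powr (Re A - Re C)"
    using norm_pochhammer_ratio_le[OF assms(2)] by blast
  obtain K2 where K2: "K2 > 0"
    "\<And>m. norm (pochhammer (1 - C) m / pochhammer (1 - A) m) \<le> K2 * (real m + 1) powr (Re A - Re C)"
    using norm_pochhammer_ratio_le[OF assms(1), of "1 - C"] by auto
  have "norm (H11_coeff A C n) \<le> (K1 + K2) * (real (nat \<bar>n\<bar>) + 1) powr (Re A - Re C)" for n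
  proof (cases n rule: int_cases2)
    case (nonneg m)
    then have "norm (H11_coeff A C n) \<le> K1 * (real m + 1) powr (Re A - Re C)"
      using K1(2)[of m] by simp
    also have "\<dots> \<le> (K1 + K2) * (real m + 1) powr (Re A - Re C)"
      using K2(1) by (intro mult_right_mono) auto
    finally show ?thesis
      using nonneg by simp
  next
    case (nonpos m)
    then have "norm (H11_coeff A C n) \<le> K2 * (real m + 1) powr (Re A - Re C)"
      using K2(2)[of m] by (simp add: H11_coeff_minus_of_nat)
    also have "\<dots> \<le> (K1 + K2) * (real m + 1) powr (Re A - Re C)"
      using K1(1) by (intro mult_right_mono) auto
    finally show ?thesis
      using nonpos by simp
  qed
  with K1(1) K2(1) show ?thesis
    using that[of "K1 + K2"] by simp
qed

lemma summable_H11: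
  assumes "1 - A \<notin> \<int>\<^sub>\<le>\<^sub>0" and "C \<notin> \<int>\<^sub>\<le>\<^sub>0" and "Re (C - A) > 1" and "norm z = 1"
  shows "(\<lambda>n. H11_coeff A C n * z powi n) summable_on UNIV"
proof -
  obtain K where "K > 0"
    and K: "\<And>n. norm (H11_coeff A C n) \<le> K * (real (nat \<bar>n\<bar>) + 1) powr (Re A - Re C)"
    using norm_H11_coeff_le[OF assms(1,2)] by blast
  define b where "b n = K * (real (nat \<bar>n\<bar>) + 1) powr (Re A - Re C)" for n :: int
  define g where "g m = K * (real m + 1) powr (Re A - Re C)" for m :: nat
  have "summable g"
    unfolding g_def using assms(3) by (intro summable_mult summable_real_plus_one_powr) simp
  moreover have "(\<lambda>m. b (int m)) = g" "(\<lambda>m. b (- int (Suc m))) = (\<lambda>m. g (Suc m))"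
    by (simp_all add: b_def g_def fun_eq_iff)
  ultimately have "summable (\<lambda>m. b (int m))" "summable (\<lambda>m. b (- int (Suc m)))"
    by (simp_all add: summable_Suc_iff)
  then have "b summable_on UNIV"
    using \<open>K > 0\<close>
    by (intro summable_on_int_split) (simp_all add: b_def summable_on_UNIV_nonneg_real_iff)
  then have "(\<lambda>n. norm (H11_coeff A C n * z powi n)) summable_on UNIV"
    by (rule summable_on_comparison_test)
       (use K assms(4) in \<open>auto simp: b_def norm_mult norm_power_int\<close>)
  then show ?thesis
    by (rule abs_summable_summable)
qed

lemma H11_sum_contiguous:
  assumes A: "1 - A \<notin> \<int>\<^sub>\<le>\<^sub>0" and C: "C \<notin> \<int>\<^sub>\<le>\<^sub>0" and "z \<noteq> 0"
      and S: "((\<lambda>n. H11_coeff A C n * z powi n) has_sum S) UNIV"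
      and S': "((\<lambda>n. H11_coeff A (C + 1) n * z powi n) has_sum S') UNIV"
  shows "C * S * (1 - z) = z * (A - C) * S'"
proof -
  define t where "t n = H11_coeff A C n * z powi n" for n
  define v where "v n = H11_coeff A (C + 1) n * z powi n" for n
  have "((\<lambda>n. t (n + 1)) has_sum S) UNIV"
    using S unfolding t_def
    by (subst has_sum_reindex_bij_witness[where j = "\<lambda>n. n + 1" and i = "\<lambda>n. n - 1"]) auto
  then have "((\<lambda>n. C * t (n + 1)) has_sum C * S) UNIV"
    by (rule has_sum_cmult_right)
  moreover have "C * t (n + 1) = z * (A - C) * v n + z * C * t n" for n
  proof -
    have "C * t (n + 1) = z * ((A + of_int n) * H11_coeff A (C + 1) n * z powi n)"
      unfolding t_def H11_coeff_index_plus1[OF A C, symmetric] using \<open>z \<noteq> 0\<close>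
      by (simp add: power_int_add_1' mult_ac)
    also have "(A + of_int n) * H11_coeff A (C + 1) n
                 = (A - C) * H11_coeff A (C + 1) n + C * H11_coeff A C n"
      using H11_coeff_denom_plus1[OF C, of A n] by (simp add: algebra_simps)
    finally show ?thesis
      by (simp add: t_def v_def algebra_simps)
  qed
  moreover have "((\<lambda>n. z * (A - C) * v n + z * C * t n) has_sum z * (A - C) * S' + z * C * S) UNIV"
    using S S' unfolding t_def v_def by (intro has_sum_add has_sum_cmult_right)
  ultimately have "C * S = z * (A - C) * S' + z * C * S"
    using has_sum_unique by fastforce
  then show ?thesis
    by (simp add: algebra_simps)
qed

lemma H11_closed_form_contiguous:
  assumes C: "C \<notin> \<int>\<^sub>\<le>\<^sub>0" and CA: "C - A \<notin> \<int>\<^sub>\<le>\<^sub>0" and z: "z \<noteq> 0" "z \<noteq> 1"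
  shows "C * H11_closed_form A C z * (1 - z) = z * (A - C) * H11_closed_form A (C + 1) z"
proof -
  have nz: "Gamma (C - A) \<noteq> 0" "C - A \<noteq> 0"
    using CA by (auto simp: Gamma_eq_zero_iff)
  have Gamma_C: "Gamma (C + 1) = C * Gamma C" "Gamma (C + 1 - A) = (C - A) * Gamma (C - A)"
    using Gamma_plus1[OF C] Gamma_plus1[OF CA] by (simp_all add: algebra_simps)
  have powr_C: "(1 - 1 / z) powr (C + 1 - 1) = (1 - 1 / z) powr (C - 1) * (1 - 1 / z)"
    using powr_add[of "1 - 1 / z" "C - 1" 1] powr_nat'[of "1 - 1 / z" 1] by simp
  show ?thesis
    unfolding H11_closed_form_def Gamma_C powr_C using z nz by (simp add: field_simps)
qed

lemma has_sum_H11_step_down: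
  assumes A: "1 - A \<notin> \<int>\<^sub>\<le>\<^sub>0" and C: "C \<notin> \<int>\<^sub>\<le>\<^sub>0" and r: "Re (C - A) > 1"
      and z: "norm z = 1" "z \<noteq> 1"
      and "((\<lambda>n. H11_coeff A (C + 1) n * z powi n) has_sum H11_closed_form A (C + 1) z) UNIV"
  shows "((\<lambda>n. H11_coeff A C n * z powi n) has_sum H11_closed_form A C z) UNIV"
proof -
  have "z \<noteq> 0" "C \<noteq> 0"
    using z C by auto
  obtain S where S: "((\<lambda>n. H11_coeff A C n * z powi n) has_sum S) UNIV"
    using summable_H11[OF A C r z(1)] by (auto simp: summable_on_def)
  have "C - A \<notin> \<int>\<^sub>\<le>\<^sub>0"
    using r by (intro Re_pos_imp_notin_nonpos_Ints) simp
  then have "C * S * (1 - z) = C * H11_closed_form A C z * (1 - z)"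
    using H11_sum_contiguous[OF A C \<open>z \<noteq> 0\<close> S assms(6)]
          H11_closed_form_contiguous[OF C _ \<open>z \<noteq> 0\<close> z(2)] by simp
  with S \<open>C \<noteq> 0\<close> z(2) show ?thesis
    by simp
qed

lemma has_sum_H11_descent:
  assumes A: "1 - A \<notin> \<int>\<^sub>\<le>\<^sub>0" and C: "C \<notin> \<int>\<^sub>\<le>\<^sub>0" and r: "Re (C - A) > 1"
      and z: "norm z = 1" "z \<noteq> 1"
      and "((\<lambda>n. H11_coeff A (C + of_nat m) n * z powi n)
             has_sum H11_closed_form A (C + of_nat m) z) UNIV"
  shows "((\<lambda>n. H11_coeff A C n * z powi n) has_sum H11_closed_form A C z) UNIV"
  using C r assms(6)
proof (induction m arbitrary: C)
  case (Suc m)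
  have "C + 1 \<notin> \<int>\<^sub>\<le>\<^sub>0"
    using Suc.prems(1) plus_one_in_nonpos_Ints_imp by blast
  moreover have "Re (C + 1 - A) > 1"
    using Suc.prems(2) by simp
  ultimately have "((\<lambda>n. H11_coeff A (C + 1) n * z powi n)
                     has_sum H11_closed_form A (C + 1) z) UNIV"
    using Suc.IH Suc.prems(3) by (simp add: add_ac)
  then show ?case
    using has_sum_H11_step_down[OF A Suc.prems(1,2) z] by blast
qed simp

lemma has_sum_H11_reflect:
  assumes "z \<noteq> 0"
  shows "((\<lambda>n. H11_coeff (1 - C) (1 - A) n * (1 / z) powi n) has_sum S) UNIV
           \<longleftrightarrow> ((\<lambda>n. H11_coeff A C n * z powi n) has_sum S) UNIV"
  using assms
  by (intro has_sum_reindex_bij_witness[where i = uminus and j = uminus])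
     (auto simp: H11_coeff_reflect [of C A "- a" for a, simplified, symmetric] power_int_minus
                 power_int_divide_distrib power_int_inverse divide_inverse)

lemma H11_closed_form_reflect:
  "H11_closed_form (1 - C) (1 - A) (1 / z) = H11_closed_form A C z"
  by (simp add: H11_closed_form_def)

lemma has_sum_H11_Re_A_neg:
  assumes A: "Re A < 0" and C: "C \<notin> \<int>\<^sub>\<le>\<^sub>0" and r: "Re (C - A) > 1"
      and z: "norm z = 1" "z \<noteq> 1"
  shows "((\<lambda>n. H11_coeff A C n * z powi n) has_sum H11_closed_form A C z) UNIV"
proof -
  define m where "m = nat \<lceil>2 - Re C\<rceil>"
  have "Re (C + of_nat m) > 1"
    unfolding m_def by simp linarith
  with A z have "((\<lambda>n. H11_coeff A (C + of_nat m) n * z powi n)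
                    has_sum H11_closed_form A (C + of_nat m) z) UNIV"
    by (intro has_sum_H11_base_case) auto
  moreover have "1 - A \<notin> \<int>\<^sub>\<le>\<^sub>0"
    using A by (intro Re_pos_imp_notin_nonpos_Ints) simp
  ultimately show ?thesis
    using has_sum_H11_descent C r z by blast
qed

theorem has_sum_H11:
  assumes A: "1 - A \<notin> \<int>\<^sub>\<le>\<^sub>0" and C: "C \<notin> \<int>\<^sub>\<le>\<^sub>0" and r: "Re (C - A) > 1"
      and z: "norm z = 1" "z \<noteq> 1"
  shows "((\<lambda>n. H11_coeff A C n * z powi n) has_sum H11_closed_form A C z) UNIV"
proof -
  define C' where "C' = C + of_nat (nat \<lceil>2 - Re C\<rceil>)"
  have "Re C' > 1"
    unfolding C'_def by simp linarith
  then have "Re (1 - C') < 0" "Re ((1 - A) - (1 - C')) > 1"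
    using r by (simp_all add: C'_def)
  moreover have "norm (1 / z) = 1" "1 / z \<noteq> 1"
    using z by (auto simp: norm_divide)
  ultimately have "((\<lambda>n. H11_coeff (1 - C') (1 - A) n * (1 / z) powi n)
                     has_sum H11_closed_form (1 - C') (1 - A) (1 / z)) UNIV"
    using A by (intro has_sum_H11_Re_A_neg) auto
  moreover have "z \<noteq> 0"
    using z by auto
  ultimately have "((\<lambda>n. H11_coeff A C' n * z powi n) has_sum H11_closed_form A C' z) UNIV"
    using has_sum_H11_reflect unfolding H11_closed_form_reflect by blast
  then show ?thesis
    unfolding C'_def using has_sum_H11_descent A C r z by blast
qed

section \<open>The \<open>\<^sub>2H\<^sub>2\<close> series at \<open>-1\<close>\<close>

lemma poch_int_minus_of_nat: "poch_int x (- int j) = 1 / ((-1) ^ j * pochhammer (1 - x) j)"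
proof -
  have "(\<Prod>k=1..j. x - of_nat k) = (\<Prod>k=1..j. (x - of_nat j) + of_nat (j - k))"
    by (intro prod.cong) (auto simp: of_nat_diff)
  also have "\<dots> = pochhammer (x - of_nat j) j"
    by (simp add: pochhammer_prod_rev)
  also have "\<dots> = (-1) ^ j * pochhammer (1 - x) j"
    using pochhammer_minus'[of "x - 1" j] by (simp add: algebra_simps)
  finally show ?thesis
    by (cases "j = 0") (simp_all add: poch_int_def)
qed

lemma poch_int_ratio_eq_H11_coeff: "poch_int A n / poch_int C n = H11_coeff A C n"
proof (cases n rule: int_cases2)
  case (nonpos j)
  then show ?thesis
    by (simp add: poch_int_minus_of_nat H11_coeff_minus_of_nat)
qed (simp add: poch_int_def)

lemma poch_int_duplication:
  "poch_int x m * poch_int (x + 1/2) m = poch_int (2 * x) (2 * m) / 4 powi m"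
proof (cases m rule: int_cases2)
  case (nonneg j)
  then show ?thesis
    by (simp add: poch_int_def pochhammer_double power_mult nat_mult_distrib)
next
  case (nonpos j)
  have "of_nat (2 ^ (2 * j)) = (4 :: complex) ^ j"
    by (simp add: power_mult)
  then have dup: "pochhammer (1 - 2 * x) (2 * j)
                    = 4 ^ j * (pochhammer (1 - x) j * pochhammer (1/2 - x) j)"
    using pochhammer_double[of "1/2 - x" j] by (simp add: algebra_simps)
  have "poch_int (2 * x) (2 * m) / 4 powi m = 4 ^ j / pochhammer (1 - 2 * x) (2 * j)"
    using nonpos poch_int_minus_of_nat[of "2 * x" "2 * j"]
    by (simp add: power_mult power_int_minus divide_inverse)
  also have "\<dots> = 1 / (pochhammer (1 - x) j * pochhammer (1/2 - x) j)"
    unfolding dup by simp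
  also have "\<dots> = poch_int x m * poch_int (x + 1/2) m"
  proof -
    have "(-1) ^ j * (-1) ^ j = (1 :: complex)"
      by (simp flip: power_mult_distrib)
    then show ?thesis
      using nonpos by (simp add: poch_int_minus_of_nat algebra_simps)
  qed
  finally show ?thesis ..
qed

lemma H22_term_duplication:
  "H22_term a (a + 1/2) c (c + 1/2) z m = H11_coeff (2 * a) (2 * c) (2 * m) * z powi m"
  by (simp add: H22_term_def poch_int_duplication poch_int_ratio_eq_H11_coeff [symmetric])

lemma Ln_1_plus_ii: "Ln (1 + \<i>) = of_real (ln 2 / 2) + \<i> * of_real (pi / 4)"
proof (rule Ln_unique)
  have "exp (ln 2 / 2 :: real) = sqrt 2"
    using powr_half_sqrt[of 2] by (simp add: powr_def)
  then show "exp (of_real (ln 2 / 2) + \<i> * of_real (pi / 4)) = 1 + \<i>"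
    by (simp add: exp_eq_polar complex_eq_iff cos_45 sin_45)
qed (use pi_gt_zero in simp_all)

lemma Ln_1_minus_ii: "Ln (1 - \<i>) = of_real (ln 2 / 2) - \<i> * of_real (pi / 4)"
proof (rule Ln_unique)
  have "exp (ln 2 / 2 :: real) = sqrt 2"
    using powr_half_sqrt[of 2] by (simp add: powr_def)
  then show "exp (of_real (ln 2 / 2) - \<i> * of_real (pi / 4)) = 1 - \<i>"
    by (simp add: exp_eq_polar complex_eq_iff cos_45 sin_45)
qed (use pi_gt_zero in \<open>simp_all, linarith\<close>)

lemma H11_closed_form_ii_average:
  "(H11_closed_form (2 * a) (2 * c) \<i> + H11_closed_form (2 * a) (2 * c) (- \<i>)) / 2
     = Gamma (2 * c) * Gamma (1 - 2 * a) / Gamma (2 * c - 2 * a)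
       * (2 :: complex) powr (c - a - 1/2) * cos ((2 * c + 2 * a - 1) * of_real pi / 4)"
proof -
  define K where "K = Gamma (2 * c) * Gamma (1 - 2 * a) / Gamma (2 * c - 2 * a)"
  define l where "l = complex_of_real (ln 2 / 2)"
  define t where "t = complex_of_real (pi / 4)"
  define X where "X = (2 * c - 1 - 2 * a) * l"
  define w where "w = (2 * c + 2 * a - 1) * t"
  have "1 - 1 / \<i> = 1 + \<i>" "1 - 1 / (- \<i>) = 1 - \<i>" "1 - - \<i> = 1 + \<i>"
    by (simp_all add: field_simps)
  moreover have "1 + \<i> \<noteq> 0" "1 - \<i> \<noteq> 0"
    by (simp_all add: complex_eq_iff)
  ultimately have
    "H11_closed_form (2 * a) (2 * c) \<i>
       = K * (exp (- (2 * a) * (l - \<i> * t)) * exp ((2 * c - 1) * (l + \<i> * t)))"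
    "H11_closed_form (2 * a) (2 * c) (- \<i>)
       = K * (exp (- (2 * a) * (l + \<i> * t)) * exp ((2 * c - 1) * (l - \<i> * t)))"
    unfolding H11_closed_form_def K_def powr_def
    by (simp_all add: Ln_1_plus_ii Ln_1_minus_ii l_def t_def mult_ac)
  then have "(H11_closed_form (2 * a) (2 * c) \<i> + H11_closed_form (2 * a) (2 * c) (- \<i>)) / 2
               = K * ((exp (X + \<i> * w) + exp (X - \<i> * w)) / 2)"
    by (simp add: X_def w_def algebra_simps flip: exp_add)
  also have "\<dots> = K * (exp X * cos w)"
    by (simp add: cos_exp_eq exp_add exp_diff exp_minus field_simps)
  also have "exp X = (2 :: complex) powr (c - a - 1/2)"
    using Ln_of_real[of 2] by (simp add: powr_def X_def l_def field_simps)
  finally show ?thesis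
    by (simp add: K_def w_def t_def mult_ac)
qed

lemma has_sum_H22_at_minus_one:
  assumes A: "1 - 2 * a \<notin> \<int>\<^sub>\<le>\<^sub>0" and C: "2 * c \<notin> \<int>\<^sub>\<le>\<^sub>0" and r: "Re (c - a) > 1/2"
  shows "(H22_term a (a + 1/2) c (c + 1/2) (-1) has_sum
            Gamma (2 * c) * Gamma (1 - 2 * a) / Gamma (2 * c - 2 * a)
            * (2 :: complex) powr (c - a - 1/2) * cos ((2 * c + 2 * a - 1) * of_real pi / 4)) UNIV"
proof -
  have "Re (2 * c - 2 * a) > 1"
    using r by simp
  then have "((\<lambda>n. H11_coeff (2 * a) (2 * c) n * z powi n)
               has_sum H11_closed_form (2 * a) (2 * c) z) UNIV" if "z \<in> {\<i>, - \<i>}" for z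
    using that by (intro has_sum_H11[OF A C]) (auto simp: complex_eq_iff cmod_def)
  then have "((\<lambda>m. H11_coeff (2 * a) (2 * c) (2 * m) * \<i> powi (2 * m))
               has_sum (H11_closed_form (2 * a) (2 * c) \<i> + H11_closed_form (2 * a) (2 * c) (- \<i>)) / 2)
             UNIV"
    by (intro has_sum_even_part) auto
  moreover have "H11_coeff (2 * a) (2 * c) (2 * m) * \<i> powi (2 * m)
                   = H22_term a (a + 1/2) c (c + 1/2) (-1) m" for m
    by (simp add: H22_term_duplication power_int_mult)
  ultimately show ?thesis
    by (simp add: H11_closed_form_ii_average)
qed

theorem mainTheorem3:
  fixes a c :: complex
  assumes "\<forall>n::nat. 2 * c \<noteq> - of_nat n"
      and "\<forall>n::nat. n \<ge> 1 \<longrightarrow> 2 * a \<noteq> of_nat n"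
      and "Re (c - a) > 1/2"
  shows "H22_term a (a + 1/2) c (c + 1/2) (-1) summable_on (UNIV::int set)
     \<and> H22 a (a + 1/2) c (c + 1/2) (-1)
         = Gamma (2*c) * Gamma (1 - 2*a) / Gamma (2*c - 2*a)
           * (2::complex) powr (c - a - 1/2)
           * cos ((2*c + 2*a - 1) * of_real pi / 4)"
proof -
  have "2 * c \<notin> \<int>\<^sub>\<le>\<^sub>0"
    using assms(1) by (auto elim!: nonpos_Ints_cases')
  moreover have "1 - 2 * a \<notin> \<int>\<^sub>\<le>\<^sub>0"
  proof
    assume "1 - 2 * a \<in> \<int>\<^sub>\<le>\<^sub>0"
    then obtain n where "1 - 2 * a = - of_nat n"
      by (elim nonpos_Ints_cases')
    then have "2 * a = of_nat (Suc n)"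
      by (simp add: algebra_simps)
    with assms(2) show False
      by (metis le_add1 plus_1_eq_Suc)
  qed
  ultimately have "(H22_term a (a + 1/2) c (c + 1/2) (-1) has_sum
                      Gamma (2*c) * Gamma (1 - 2*a) / Gamma (2*c - 2*a)
                      * (2::complex) powr (c - a - 1/2) * cos ((2*c + 2*a - 1) * of_real pi / 4)) UNIV"
    using has_sum_H22_at_minus_one assms(3) by blast
  then show ?thesis
    unfolding H22_def by (auto intro: has_sum_imp_summable infsumI)
qed

end
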